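(* Let $\Gamma=\{\gamma_0=\mathrm{id},\dots,\gamma_{t-1}\}$ be a finite group, $\phi:\Gamma\to\operatorname{Aut}(G)$ and $\tau:\Gamma\to O(\mathbb{R}^3)$ homomorphisms with $\tau(\gamma)\mathcal{Y}=\mathcal{Y}$, and $G$ a $\Gamma$-symmetric graph. Let $H\le G$ be a subgraph isomorphic to $K_4$ such that $V(\phi(\gamma)H)\cap V(H)=\emptyset$ for every $\gamma\ne\mathrm{id}$. Let $G//\{\phi(\gamma_i)H\}_{i=0}^{t-1}$ denote the graph obtained from $G$ by contracting each of the $t$ copies $\phi(\gamma_i)H$ to a single vertex (deleting the edges inside each copy), with the induced $\Gamma$-action, and assume this graph is simple. If $G//\{\phi(\gamma_i)H\}_{i=0}^{t-1}$ is $\tau(\Gamma)$-rigid on $\mathcal{Y}$, then $G$ is $\tau(\Gamma)$-rigid on $\mathcal{Y}$.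
   Context: $\mathcal{Y}=\{(x,y,z):x^2+y^2=1\}$. A framework on $\mathcal{Y}$ is $(G,p)$, $G$ finite simple, $p:V\to\mathcal{Y}$, $p(u)\neq p(v)$ for edges $uv$. Its rigidity matrix $R_{\mathcal{Y}}(G,p)$ is the $(|E|+|V|)\times 3|V|$ matrix with a row for each edge $v_iv_j$ having $p(v_i)-p(v_j)$ in the columns of $v_i$ and $p(v_j)-p(v_i)$ in those of $v_j$, and a row for each vertex $v_i$ with $p(v_i)=(x_i,y_i,z_i)$ having $(x_i,y_i,0)$ in the columns of $v_i$ (zeros elsewhere). The framework is infinitesimally rigid if every kernel vector $u$ has the form $u_i=(0,0,a)+b(-y_i,x_i,0)$. A framework is $\Gamma$-symmetric w.r.t. $\phi,\tau$ if $\tau(\gamma)p(v)=p(\phi(\gamma)v)$. $G$ is $\tau(\Gamma)$-rigid on $\mathcal{Y}$ if some $\Gamma$-symmetric framework $(G,p)$ on $\mathcal{Y}$ w.r.t. $\phi,\tau$ is infinitesimally rigid. *)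

theory Defs
  imports "HOL-Algebra.Group" "HOL-Analysis.Analysis"
begin

definition cylinder :: "(real^3) set" where
  "cylinder = {q. (q$1)^2 + (q$2)^2 = 1}"

definition simple_graph :: "'v set \<Rightarrow> 'v set set \<Rightarrow> bool" where
  "simple_graph V E \<longleftrightarrow> finite V \<and>
     (\<forall>e\<in>E. \<exists>a b. a \<in> V \<and> b \<in> V \<and> a \<noteq> b \<and> e = {a, b})"

definition graph_aut :: "'v set \<Rightarrow> 'v set set \<Rightarrow> ('v \<Rightarrow> 'v) \<Rightarrow> bool" where
  "graph_aut V E f \<longleftrightarrow> bij_betw f V V \<and>
     (\<forall>a\<in>V. \<forall>b\<in>V. {a, b} \<in> E \<longleftrightarrow> {f a, f b} \<in> E)"

definition sym_graph :: "('g, 'm) monoid_scheme \<Rightarrow> 'v set \<Rightarrow> 'v set set \<Rightarrow> ('g \<Rightarrow> 'v \<Rightarrow> 'v) \<Rightarrow> bool" where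
  "sym_graph Gam V E \<phi> \<longleftrightarrow>
     (\<forall>g\<in>carrier Gam. graph_aut V E (\<phi> g)) \<and>
     (\<forall>g\<in>carrier Gam. \<forall>h\<in>carrier Gam. \<forall>v\<in>V. \<phi> (g \<otimes>\<^bsub>Gam\<^esub> h) v = \<phi> g (\<phi> h v))"

definition cyl_sym_rep :: "('g, 'm) monoid_scheme \<Rightarrow> ('g \<Rightarrow> real^3 \<Rightarrow> real^3) \<Rightarrow> bool" where
  "cyl_sym_rep Gam \<tau> \<longleftrightarrow>
     (\<forall>g\<in>carrier Gam. orthogonal_transformation (\<tau> g) \<and> \<tau> g ` cylinder = cylinder) \<and>
     (\<forall>g\<in>carrier Gam. \<forall>h\<in>carrier Gam. \<tau> (g \<otimes>\<^bsub>Gam\<^esub> h) = \<tau> g \<circ> \<tau> h)"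

definition cyl_framework :: "'v set \<Rightarrow> 'v set set \<Rightarrow> ('v \<Rightarrow> real^3) \<Rightarrow> bool" where
  "cyl_framework V E p \<longleftrightarrow> (\<forall>v\<in>V. p v \<in> cylinder) \<and>
     (\<forall>a b. {a, b} \<in> E \<longrightarrow> p a \<noteq> p b)"

text \<open>u (restricted to V) lies in the kernel of the rigidity matrix R_Y(G,p):
  edge row v_i v_j gives (p_i - p_j).u_i + (p_j - p_i).u_j = 0,
  vertex row v_i gives (x_i, y_i, 0).u_i = 0.\<close>
definition cyl_inf_motion :: "'v set \<Rightarrow> 'v set set \<Rightarrow> ('v \<Rightarrow> real^3) \<Rightarrow> ('v \<Rightarrow> real^3) \<Rightarrow> bool" where
  "cyl_inf_motion V E p u \<longleftrightarrow>
     (\<forall>a b. {a, b} \<in> E \<longrightarrow> (p a - p b) \<bullet> u a + (p b - p a) \<bullet> u b = 0) \<and>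
     (\<forall>v\<in>V. vector [p v $ 1, p v $ 2, 0] \<bullet> u v = 0)"

definition cyl_inf_rigid :: "'v set \<Rightarrow> 'v set set \<Rightarrow> ('v \<Rightarrow> real^3) \<Rightarrow> bool" where
  "cyl_inf_rigid V E p \<longleftrightarrow>
     (\<forall>u. cyl_inf_motion V E p u \<longrightarrow>
        (\<exists>a b::real. \<forall>v\<in>V. u v = vector [0, 0, a] + b *\<^sub>R vector [- (p v $ 2), p v $ 1, 0]))"

definition sym_framework :: "('g, 'm) monoid_scheme \<Rightarrow> 'v set \<Rightarrow> ('g \<Rightarrow> 'v \<Rightarrow> 'v)
    \<Rightarrow> ('g \<Rightarrow> real^3 \<Rightarrow> real^3) \<Rightarrow> ('v \<Rightarrow> real^3) \<Rightarrow> bool" where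
  "sym_framework Gam V \<phi> \<tau> p \<longleftrightarrow> (\<forall>g\<in>carrier Gam. \<forall>v\<in>V. \<tau> g (p v) = p (\<phi> g v))"

definition tau_rigid :: "('g, 'm) monoid_scheme \<Rightarrow> 'v set \<Rightarrow> 'v set set \<Rightarrow> ('g \<Rightarrow> 'v \<Rightarrow> 'v)
    \<Rightarrow> ('g \<Rightarrow> real^3 \<Rightarrow> real^3) \<Rightarrow> bool" where
  "tau_rigid Gam V E \<phi> \<tau> \<longleftrightarrow>
     (\<exists>p. cyl_framework V E p \<and> sym_framework Gam V \<phi> \<tau> p \<and> cyl_inf_rigid V E p)"

text \<open>Contraction of the copies phi(gamma) H, H having vertex set S.
  A vertex v is sent to the copy containing it, or to {v} if it lies in no copy.\<close>
definition contr_class :: "('g, 'm) monoid_scheme \<Rightarrow> ('g \<Rightarrow> 'v \<Rightarrow> 'v) \<Rightarrow> 'v set \<Rightarrow> 'v \<Rightarrow> 'v set" where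
  "contr_class Gam \<phi> S v = insert v (\<Union>{\<phi> g ` S | g. g \<in> carrier Gam \<and> v \<in> \<phi> g ` S})"

definition contr_V :: "('g, 'm) monoid_scheme \<Rightarrow> 'v set \<Rightarrow> ('g \<Rightarrow> 'v \<Rightarrow> 'v) \<Rightarrow> 'v set \<Rightarrow> 'v set set" where
  "contr_V Gam V \<phi> S = contr_class Gam \<phi> S ` V"

definition contr_E :: "('g, 'm) monoid_scheme \<Rightarrow> 'v set set \<Rightarrow> ('g \<Rightarrow> 'v \<Rightarrow> 'v) \<Rightarrow> 'v set \<Rightarrow> 'v set set set" where
  "contr_E Gam E \<phi> S = {{contr_class Gam \<phi> S a, contr_class Gam \<phi> S b} | a b.
      {a, b} \<in> E \<and> contr_class Gam \<phi> S a \<noteq> contr_class Gam \<phi> S b}"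

definition contr_simple :: "('g, 'm) monoid_scheme \<Rightarrow> 'v set set \<Rightarrow> ('g \<Rightarrow> 'v \<Rightarrow> 'v) \<Rightarrow> 'v set \<Rightarrow> bool" where
  "contr_simple Gam E \<phi> S \<longleftrightarrow>
     (\<forall>a b c d. {a, b} \<in> E \<and> {c, d} \<in> E \<and>
        contr_class Gam \<phi> S a \<noteq> contr_class Gam \<phi> S b \<and>
        {contr_class Gam \<phi> S a, contr_class Gam \<phi> S b} = {contr_class Gam \<phi> S c, contr_class Gam \<phi> S d}
        \<longrightarrow> {a, b} = {c, d})"

definition contr_action :: "('g \<Rightarrow> 'v \<Rightarrow> 'v) \<Rightarrow> 'g \<Rightarrow> 'v set \<Rightarrow> 'v set" where
  "contr_action \<phi> g X = \<phi> g ` X"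

end

theory Submission
  imports Defs
begin

text \<open>Place each copy \<phi>(\<gamma>)H as a small K4 around the position of its contracted vertex: the
  i-th vertex of \<phi> g S goes to \<tau> g applied to the i-th point of a fixed K4 placement on the
  cylinder which collapses to the point p'(S) as its parameter e tends to 0, and every other
  vertex keeps its contracted position. This placement is \<Gamma>-symmetric, and for small e > 0 it
  is a framework. Its K4 is infinitesimally rigid for 0 < e < pi, so every infinitesimal motion is
  constant on each copy. If rigidity failed for arbitrarily small e, normalised non-trivial motions
  would accumulate (by compactness) at a non-trivial motion of the degenerate placement e = 0 that
  is constant on copies, i.e. at a non-trivial motion of the contracted framework.

  Tangent vectors to the cylinder are written in the coordinates (angular speed, vertical speed),
  in which the rows of the rigidity matrix become scalar equations.\<close>

section \<open>Infinitesimal motions on the cylinder in coordinates\<close>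

definition cross_z :: "real^3 \<Rightarrow> real^3 \<Rightarrow> real" where
  "cross_z P Q = P$1 * Q$2 - P$2 * Q$1"

definition cyl_tangent :: "real^3 \<Rightarrow> real \<times> real \<Rightarrow> real^3" where
  "cyl_tangent P u = vector [- fst u * P$2, fst u * P$1, snd u]"

definition cyl_edge_row :: "real^3 \<Rightarrow> real^3 \<Rightarrow> real \<times> real \<Rightarrow> real \<times> real \<Rightarrow> real" where
  "cyl_edge_row P Q u w = - cross_z P Q * (fst u - fst w) + (P$3 - Q$3) * (snd u - snd w)"

definition cyl_coord_motion :: "'v set set \<Rightarrow> ('v \<Rightarrow> real^3) \<Rightarrow> ('v \<Rightarrow> real \<times> real) \<Rightarrow> bool" where
  "cyl_coord_motion E p u \<longleftrightarrow> (\<forall>a b. {a, b} \<in> E \<longrightarrow> cyl_edge_row (p a) (p b) (u a) (u b) = 0)"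

lemma inner_vec3: "(x::real^3) \<bullet> y = x$1 * y$1 + x$2 * y$2 + x$3 * y$3"
  by (simp add: inner_vec_def sum_3)

lemma cylinder_iff: "q \<in> cylinder \<longleftrightarrow> (q$1)^2 + (q$2)^2 = 1"
  by (simp add: cylinder_def)

lemma cyl_tangent_edge:
  "(P - Q) \<bullet> cyl_tangent P u + (Q - P) \<bullet> cyl_tangent Q w
   = cyl_edge_row P Q u w"
  by (simp add: inner_vec3 cyl_tangent_def cyl_edge_row_def cross_z_def algebra_simps)

lemma cyl_tangent_normal: "vector [P$1, P$2, 0] \<bullet> cyl_tangent P u = 0"
  by (simp add: inner_vec3 cyl_tangent_def algebra_simps)

lemma cyl_tangent_trivial:
  "vector [0, 0, a] + b *\<^sub>R vector [- (P$2), P$1, 0] = cyl_tangent P (b, a)"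
  by (simp add: cyl_tangent_def vec_eq_iff forall_3)

lemma cyl_tangent_decompose:
  assumes "P \<in> cylinder" and "vector [P$1, P$2, 0] \<bullet> x = 0"
  shows "x = cyl_tangent P (P$1 * x$2 - P$2 * x$1, x$3)"
proof -
  have "P$1 * x$1 + P$2 * x$2 = 0" "(P$1)^2 + (P$2)^2 = 1"
    using assms by (simp_all add: inner_vec3 cylinder_iff)
  then have "x$1 = - (P$1 * x$2 - P$2 * x$1) * P$2" "x$2 = (P$1 * x$2 - P$2 * x$1) * P$1"
    by algebra+
  then show ?thesis by (simp add: cyl_tangent_def vec_eq_iff forall_3)
qed

lemma cyl_tangent_inj:
  assumes "P \<in> cylinder" and "cyl_tangent P u = cyl_tangent P w"
  shows "u = w"
proof -
  have "fst u * P$2 = fst w * P$2" "fst u * P$1 = fst w * P$1" "snd u = snd w"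
    using assms(2) by (auto simp: cyl_tangent_def vec_eq_iff forall_3)
  moreover have "(P$1)^2 + (P$2)^2 = 1" using assms(1) by (simp add: cylinder_iff)
  ultimately have "fst u = fst w" by (metis mult_right_cancel power2_eq_square sum_squares_eq_zero_iff zero_neq_one)
  then show ?thesis using \<open>snd u = snd w\<close> by (simp add: prod_eq_iff)
qed

lemma cyl_inf_rigid_iff_coord:
  assumes cyl: "\<forall>v\<in>V. p v \<in> cylinder" and E_V: "\<forall>a b. {a, b} \<in> E \<longrightarrow> a \<in> V \<and> b \<in> V"
  shows "cyl_inf_rigid V E p \<longleftrightarrow> (\<forall>u. cyl_coord_motion E p u \<longrightarrow> u constant_on V)"
proof
  assume rigid: "cyl_inf_rigid V E p"
  show "\<forall>u. cyl_coord_motion E p u \<longrightarrow> u constant_on V"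
  proof (intro allI impI)
    fix u assume "cyl_coord_motion E p u"
    then have "cyl_inf_motion V E p (\<lambda>v. cyl_tangent (p v) (u v))"
      by (simp add: cyl_inf_motion_def cyl_coord_motion_def cyl_tangent_edge cyl_tangent_normal)
    then obtain a b where "\<forall>v\<in>V. cyl_tangent (p v) (u v) = cyl_tangent (p v) (b, a)"
      using rigid unfolding cyl_inf_rigid_def cyl_tangent_trivial by blast
    then show "u constant_on V"
      using cyl cyl_tangent_inj unfolding constant_on_def by blast
  qed
next
  assume rigid: "\<forall>u. cyl_coord_motion E p u \<longrightarrow> u constant_on V"
  show "cyl_inf_rigid V E p"
    unfolding cyl_inf_rigid_def
  proof (intro allI impI)
    fix x assume x: "cyl_inf_motion V E p x"
    define u where "u v = (p v$1 * x v$2 - p v$2 * x v$1, x v$3)" for v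
    have tangent: "x v = cyl_tangent (p v) (u v)" if "v \<in> V" for v
      unfolding u_def using x cyl that by (intro cyl_tangent_decompose) (auto simp: cyl_inf_motion_def)
    have "cyl_coord_motion E p u"
      unfolding cyl_coord_motion_def
    proof (intro allI impI)
      fix a b assume ab: "{a, b} \<in> E"
      then have "(p a - p b) \<bullet> x a + (p b - p a) \<bullet> x b = 0"
        using x unfolding cyl_inf_motion_def by blast
      then show "cyl_edge_row (p a) (p b) (u a) (u b) = 0"
        using E_V ab by (simp add: tangent cyl_tangent_edge)
    qed
    then obtain c where "\<forall>v\<in>V. u v = c" using rigid unfolding constant_on_def by blast
    then have "\<forall>v\<in>V. x v = vector [0, 0, snd c] + fst c *\<^sub>R vector [- (p v $ 2), p v $ 1, 0]"
      by (simp add: tangent cyl_tangent_trivial)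
    then show "\<exists>a b. \<forall>v\<in>V. x v = vector [0, 0, a] + b *\<^sub>R vector [- (p v $ 2), p v $ 1, 0]"
      by blast
  qed
qed

lemma cyl_coord_motion_affine:
  "cyl_coord_motion E p u \<Longrightarrow> cyl_coord_motion E p (\<lambda>v. c *\<^sub>R (u v - z))"
proof -
  have "cyl_edge_row P Q (c *\<^sub>R (x - z)) (c *\<^sub>R (y - z)) = c * cyl_edge_row P Q x y" for P Q x y
    by (simp add: cyl_edge_row_def algebra_simps)
  then show "cyl_coord_motion E p u \<Longrightarrow> cyl_coord_motion E p (\<lambda>v. c *\<^sub>R (u v - z))"
    by (simp add: cyl_coord_motion_def)
qed

lemma cyl_coord_motion_map:
  assumes "\<forall>x y. cross_z (T x) (T y) = d * cross_z x y" and "\<forall>x. T x $ 3 = c * x $ 3"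
    and "cyl_coord_motion E (T \<circ> p) u"
  shows "cyl_coord_motion E p (\<lambda>v. (d * fst (u v), c * snd (u v)))"
  using assms unfolding cyl_coord_motion_def cyl_edge_row_def by (simp add: algebra_simps)

lemma cyl_coord_motion_limit:
  assumes "F \<noteq> bot" and E_V: "\<forall>a b. {a, b} \<in> E \<longrightarrow> a \<in> V \<and> b \<in> V"
    and p: "\<And>v. v \<in> V \<Longrightarrow> ((\<lambda>x. p x v) \<longlongrightarrow> p0 v) F"
    and u: "\<And>v. v \<in> V \<Longrightarrow> ((\<lambda>x. u x v) \<longlongrightarrow> u0 v) F"
    and motion: "\<forall>\<^sub>F x in F. cyl_coord_motion E (p x) (u x)"
  shows "cyl_coord_motion E p0 u0"
  unfolding cyl_coord_motion_def
proof (intro allI impI)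
  fix a b assume ab: "{a, b} \<in> E"
  then have "a \<in> V" "b \<in> V" using E_V by blast+
  have "((\<lambda>x. cyl_edge_row (p x a) (p x b) (u x a) (u x b))
      \<longlongrightarrow> cyl_edge_row (p0 a) (p0 b) (u0 a) (u0 b)) F"
    unfolding cyl_edge_row_def cross_z_def using \<open>a \<in> V\<close> \<open>b \<in> V\<close>
    by (intro tendsto_intros p u)
  moreover have "((\<lambda>x. cyl_edge_row (p x a) (p x b) (u x a) (u x b)) \<longlongrightarrow> 0) F"
    using motion ab by (intro tendsto_eventually) (auto elim!: eventually_mono simp: cyl_coord_motion_def)
  ultimately show "cyl_edge_row (p0 a) (p0 b) (u0 a) (u0 b) = 0"
    using tendsto_unique[OF \<open>F \<noteq> bot\<close>] by blast
qed

lemma cyl_coord_motion_normalize: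
  assumes u: "cyl_coord_motion E p u" and V: "finite V" "v0 \<in> V" and nc: "\<not> u constant_on V"
  obtains w where "cyl_coord_motion E p w" "w v0 = 0" "(\<Sum>v\<in>V. norm (w v)) = 1"
    "\<And>v v'. u v = u v' \<Longrightarrow> w v = w v'"
proof -
  define N where "N = (\<Sum>v\<in>V. norm (u v - u v0))"
  obtain v where v: "v \<in> V" "u v \<noteq> u v0" using nc V(2) unfolding constant_on_def by blast
  then have "0 < norm (u v - u v0)" by simp
  also have "\<dots> \<le> N" unfolding N_def using V(1) v(1) by (intro member_le_sum) auto
  finally have N: "N > 0" .
  define w where "w v = inverse N *\<^sub>R (u v - u v0)" for v
  have "(\<Sum>v\<in>V. norm (w v)) = inverse N * N"
    using N by (simp add: w_def N_def sum_distrib_left)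
  then have sum: "(\<Sum>v\<in>V. norm (w v)) = 1" using N by simp
  have motion: "cyl_coord_motion E p w" unfolding w_def by (rule cyl_coord_motion_affine[OF u])
  show ?thesis by (rule that[OF motion _ sum]) (simp_all add: w_def)
qed

lemma vec3_eq_combination:
  "(x::real^3) = x$1 *\<^sub>R axis 1 1 + x$2 *\<^sub>R axis 2 1 + x$3 *\<^sub>R axis 3 1"
  by (simp add: vec_eq_iff forall_3 axis_def)

text \<open>The isometry maps the vertical line through (1,0,0) into the cylinder, which forces it to
  preserve the z-direction; it then acts on the horizontal plane as a rotation or reflection.\<close>
lemma cylinder_isometry_coords:
  assumes T: "orthogonal_transformation T" and C: "T ` cylinder = cylinder"
  obtains d c where "d \<noteq> 0" "c \<noteq> 0"
    "\<forall>x y. cross_z (T x) (T y) = d * cross_z x y" "\<forall>x. T x $ 3 = c * x $ 3"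
proof -
  have lin: "linear T" and ip: "\<And>v w. T v \<bullet> T w = v \<bullet> w"
    using T by (simp_all add: orthogonal_transformation_def)
  define a b c where "a = T (axis 1 1)" "b = T (axis 2 1)" "c = T (axis 3 1)"
  have Tx: "T x $ i = x$1 * a$i + x$2 * b$i + x$3 * c$i" for x i
    using arg_cong[OF vec3_eq_combination[of x], of T] lin
    by (simp add: a_b_c_def linear_add linear_scale)
  have on_cyl: "(a$1 + t * c$1)^2 + (a$2 + t * c$2)^2 = 1" for t
  proof -
    have "vector [1, 0, t] \<in> cylinder" by (simp add: cylinder_iff)
    then have "T (vector [1, 0, t]) \<in> cylinder" using C by blast
    then show ?thesis by (simp add: cylinder_iff Tx)
  qed
  \<comment> \<open>second difference of the constant quadratic t \<mapsto> |(a + t c)$1|^2 + |(a + t c)$2|^2\<close>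
  have "2 * ((c$1)^2 + (c$2)^2) = ((a$1 + 1 * c$1)^2 + (a$2 + 1 * c$2)^2)
      + ((a$1 + -1 * c$1)^2 + (a$2 + -1 * c$2)^2) - 2 * ((a$1 + 0 * c$1)^2 + (a$2 + 0 * c$2)^2)"
    by algebra
  then have c12: "c$1 = 0" "c$2 = 0"
    by (simp_all only: on_cyl) (simp_all add: sum_power2_eq_zero_iff del: distrib_left_numeral)
  have "a \<bullet> a = 1" "b \<bullet> b = 1" "c \<bullet> c = 1" "a \<bullet> b = 0" "a \<bullet> c = 0" "b \<bullet> c = 0"
    unfolding a_b_c_def ip by (simp_all add: inner_axis_axis)
  then have c3: "(c$3)^2 = 1" and a3: "a$3 = 0" and b3: "b$3 = 0"
    and ab: "(a$1)^2 + (a$2)^2 = 1" "(b$1)^2 + (b$2)^2 = 1" "a$1 * b$1 + a$2 * b$2 = 0"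
    using c12 by (auto simp: inner_vec3 power2_eq_square)
  define d where "d = a$1 * b$2 - a$2 * b$1"
  have "d^2 = ((a$1)^2 + (a$2)^2) * ((b$1)^2 + (b$2)^2) - (a$1 * b$1 + a$2 * b$2)^2"
    unfolding d_def by algebra
  then have "d \<noteq> 0" using ab by auto
  moreover have "c$3 \<noteq> 0" using c3 by auto
  moreover have "\<forall>x y. cross_z (T x) (T y) = d * cross_z x y"
    by (simp add: cross_z_def Tx d_def a3 b3 c12 algebra_simps)
  moreover have "\<forall>x. T x $ 3 = c$3 * x $ 3" by (simp add: Tx a3 b3)
  ultimately show ?thesis using that by blast
qed

section \<open>A rigid K4 on the cylinder\<close>

definition rot_z :: "real \<Rightarrow> real^3 \<Rightarrow> real^3" where
  "rot_z t q = vector [q$1 * cos t - q$2 * sin t, q$1 * sin t + q$2 * cos t, q$3]"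

definition shift_z :: "real \<Rightarrow> real^3 \<Rightarrow> real^3" where
  "shift_z t q = vector [q$1, q$2, q$3 + t]"

text \<open>At parameter 0 all four points collapse to q; this is how the framework on G constructed
  below degenerates to the contracted framework.\<close>
definition K4_placement :: "real \<Rightarrow> real^3 \<Rightarrow> nat \<Rightarrow> real^3" where
  "K4_placement e q i =
     (if i = 0 then q else if i = 1 then shift_z e q else if i = 2 then rot_z e q
      else shift_z e (rot_z (- e) q))"

lemma rot_z_cylinder: "rot_z t q \<in> cylinder \<longleftrightarrow> q \<in> cylinder"
proof -
  have "(q$1 * cos t - q$2 * sin t)^2 + (q$1 * sin t + q$2 * cos t)^2
        = ((q$1)^2 + (q$2)^2) * ((sin t)^2 + (cos t)^2)"
    by algebra
  then show ?thesis by (simp add: cylinder_iff rot_z_def)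
qed

lemma shift_z_cylinder: "shift_z t q \<in> cylinder \<longleftrightarrow> q \<in> cylinder"
  by (simp add: cylinder_iff shift_z_def)

lemma K4_placement_cylinder: "q \<in> cylinder \<Longrightarrow> K4_placement e q i \<in> cylinder"
  by (simp add: K4_placement_def rot_z_cylinder shift_z_cylinder)

lemma K4_placement_zero: "K4_placement 0 q i = q"
  by (simp add: K4_placement_def rot_z_def shift_z_def vec_eq_iff forall_3)

lemma isCont_vector3:
  "isCont f1 t \<Longrightarrow> isCont f2 t \<Longrightarrow> isCont f3 t \<Longrightarrow> isCont (\<lambda>t. vector [f1 t, f2 t, f3 t] :: real^3) t"
proof (unfold isCont_def, rule vec_tendstoI)
  fix i :: 3
  assume "f1 \<midarrow>t\<rightarrow> f1 t" "f2 \<midarrow>t\<rightarrow> f2 t" "f3 \<midarrow>t\<rightarrow> f3 t"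
  then show "(\<lambda>t. vector [f1 t, f2 t, f3 t] $ i) \<midarrow>t\<rightarrow> (vector [f1 t, f2 t, f3 t] :: real^3) $ i"
    using exhaust_3[of i] by auto
qed

lemma isCont_rot_z: "isCont f t \<Longrightarrow> isCont (\<lambda>t. rot_z (f t) q) t"
  unfolding rot_z_def by (intro isCont_vector3 continuous_intros)

lemma isCont_shift_z: "isCont f t \<Longrightarrow> isCont g t \<Longrightarrow> isCont (\<lambda>t. shift_z (f t) (g t)) t"
  unfolding shift_z_def by (intro isCont_vector3 continuous_intros isCont_vec_nth)

lemma isCont_K4_placement: "isCont (\<lambda>e. K4_placement e q i) e"
  by (cases "i = 0"; cases "i = 1"; cases "i = 2")
    (simp_all add: K4_placement_def isCont_rot_z isCont_shift_z continuous_intros)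

lemma cross_z_K4_placement:
  fixes e :: real
  assumes "q \<in> cylinder"
  defines "Q \<equiv> K4_placement e q"
  shows "cross_z (Q 0) (Q 1) = 0" "cross_z (Q 0) (Q 2) = sin e" "cross_z (Q 0) (Q 3) = - sin e"
    "cross_z (Q 1) (Q 2) = sin e" "cross_z (Q 1) (Q 3) = - sin e"
    "cross_z (Q 2) (Q 3) = - 2 * sin e * cos e"
proof -
  have r: "(q$1)^2 + (q$2)^2 = 1" using assms(1) by (simp add: cylinder_iff)
  have "cross_z (Q 2) (Q 3) = - 2 * sin e * cos e * ((q$1)^2 + (q$2)^2)"
    by (simp add: Q_def K4_placement_def rot_z_def shift_z_def cross_z_def power2_eq_square algebra_simps)
  then show "cross_z (Q 2) (Q 3) = - 2 * sin e * cos e" using r by simp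
  have "cross_z (Q 0) (Q 2) = sin e * ((q$1)^2 + (q$2)^2)"
    "cross_z (Q 1) (Q 2) = sin e * ((q$1)^2 + (q$2)^2)"
    "cross_z (Q 0) (Q 3) = - sin e * ((q$1)^2 + (q$2)^2)"
    "cross_z (Q 1) (Q 3) = - sin e * ((q$1)^2 + (q$2)^2)"
    by (simp_all add: Q_def K4_placement_def rot_z_def shift_z_def cross_z_def power2_eq_square algebra_simps)
  then show "cross_z (Q 0) (Q 2) = sin e" "cross_z (Q 1) (Q 2) = sin e"
    "cross_z (Q 0) (Q 3) = - sin e" "cross_z (Q 1) (Q 3) = - sin e"
    using r by simp_all
  show "cross_z (Q 0) (Q 1) = 0"
    by (simp add: Q_def K4_placement_def shift_z_def cross_z_def)
qed

lemma height_K4_placement: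
  "K4_placement e q 0 $ 3 = q$3" "K4_placement e q 1 $ 3 = q$3 + e"
  "K4_placement e q 2 $ 3 = q$3" "K4_placement e q 3 $ 3 = q$3 + e"
  by (simp_all add: K4_placement_def rot_z_def shift_z_def)

lemma K4_placement_coord_rigid:
  assumes q: "q \<in> cylinder" and e: "0 < e" "e < pi"
    and u: "cyl_coord_motion {{i, j} | i j. i < 4 \<and> j < (4::nat) \<and> i \<noteq> j} (K4_placement e q) u"
    and i: "i < 4"
  shows "u i = u 0"
proof -
  define a b where "a i = fst (u i)" "b i = snd (u i)" for i
  have edge: "- cross_z (K4_placement e q i) (K4_placement e q j) * (a i - a j)
      + (K4_placement e q i $ 3 - K4_placement e q j $ 3) * (b i - b j) = 0"
    if "i < 4" "j < 4" "i \<noteq> j" for i j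
    using u that unfolding cyl_coord_motion_def cyl_edge_row_def a_b_def by blast
  note K = cross_z_K4_placement[OF q] height_K4_placement
  have s: "sin e \<noteq> 0" using e sin_gt_zero by fastforce
  have c: "cos e \<noteq> 1" using e cos_monotone_0_pi[of 0 e] by auto
  have b1: "b 1 = b 0" using edge[of 0 1, unfolded K] e by simp
  have a2: "a 2 = a 0" using edge[of 0 2, unfolded K] s by simp
  have a3: "a 3 = a 1" using edge[of 1 3, unfolded K] s by simp
  have e03: "sin e * (a 0 - a 1) = e * (b 0 - b 3)"
    using edge[of 0 3, unfolded K] a3 by (simp add: algebra_simps)
  have e12: "sin e * (a 0 - a 1) = - e * (b 0 - b 2)"
    using edge[of 1 2, unfolded K] a2 b1 by (simp add: algebra_simps)
  have e23: "2 * sin e * cos e * (a 0 - a 1) = e * (b 2 - b 3)"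
    using edge[of 2 3, unfolded K] a2 a3 by (simp add: algebra_simps)
  have "2 * sin e * cos e * (a 0 - a 1) = 2 * sin e * (a 0 - a 1)"
    using e03 e12 e23 by (simp add: algebra_simps)
  then have "2 * sin e * (a 0 - a 1) * (cos e - 1) = 0" by (simp add: algebra_simps)
  then have a1: "a 1 = a 0" using s c by simp
  have "b 2 = b 0" "b 3 = b 0" using e03 e12 a1 e by simp_all
  moreover have "i \<in> {0, 1, 2, 3}" using i by auto
  ultimately have "a i = a 0 \<and> b i = b 0"
    using a1 a2 a3 b1 by auto
  then show ?thesis by (simp add: a_b_def prod_eq_iff)
qed

lemma K4_placement_inj:
  assumes q: "q \<in> cylinder" and e: "0 < e" "e < pi"
    and ij: "i < 4" "j < 4" and eq: "K4_placement e q i = K4_placement e q j"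
  shows "i = j"
proof -
  define f where "f k = (cross_z (K4_placement e q 0) (K4_placement e q k), K4_placement e q k $ 3)" for k
  have "cross_z (K4_placement e q 0) (K4_placement e q 0) = 0" by (simp add: cross_z_def)
  then have "f 0 = (0, q$3)" "f 1 = (0, q$3 + e)" "f 2 = (sin e, q$3)" "f 3 = (- sin e, q$3 + e)"
    unfolding f_def cross_z_K4_placement[OF q] height_K4_placement by simp_all
  moreover have "sin e > 0" using e sin_gt_zero by blast
  moreover have "f i = f j" using eq by (simp add: f_def)
  moreover have "i \<in> {0, 1, 2, 3}" "j \<in> {0, 1, 2, 3}" using ij by auto
  ultimately show ?thesis using e by auto
qed

section \<open>Rigidity of small perturbations\<close>

lemma finite_family_convergent_subseq:
  fixes f :: "nat \<Rightarrow> 'i \<Rightarrow> 'a::metric_space"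
  assumes "finite I" and "compact K" and "\<And>k i. i \<in> I \<Longrightarrow> f k i \<in> K"
  obtains r l where "strict_mono r" "\<And>i. i \<in> I \<Longrightarrow> (\<lambda>k. f (r k) i) \<longlonglongrightarrow> l i"
proof -
  have "\<exists>r l. strict_mono r \<and> (\<forall>i\<in>I. (\<lambda>k. f (r k) i) \<longlonglongrightarrow> l i)"
    using assms(1,3)
  proof (induction I rule: finite_induct)
    case empty
    show ?case using strict_mono_id by blast
  next
    case (insert j I)
    then obtain r l where r: "strict_mono r" and l: "\<forall>i\<in>I. (\<lambda>k. f (r k) i) \<longlonglongrightarrow> l i"
      by blast
    have "\<forall>k. f (r k) j \<in> K" using insert.prems by blast
    then obtain lj r' where "lj \<in> K" and r': "strict_mono r'" and lj: "((\<lambda>k. f (r k) j) \<circ> r') \<longlonglongrightarrow> lj"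
      by (rule seq_compactE[OF compact_imp_seq_compact[OF assms(2)]])
    have "(\<lambda>k. f ((r \<circ> r') k) i) \<longlonglongrightarrow> (l(j := lj)) i" if "i \<in> insert j I" for i
    proof (cases "i = j")
      case False
      then have "((\<lambda>k. f (r k) i) \<circ> r') \<longlonglongrightarrow> l i"
        using l that r' LIMSEQ_subseq_LIMSEQ by fastforce
      then show ?thesis using False by (simp add: comp_def)
    qed (use lj in \<open>simp add: comp_def\<close>)
    then show ?case using strict_mono_o[OF r r'] by blast
  qed
  then show ?thesis using that by blast
qed

lemma not_eventually_at_right_zero_seq:
  assumes "\<not> eventually P (at_right (0::real))"
  obtains x where "\<And>k. 0 < x k" "\<And>k. \<not> P (x k)" "x \<longlonglongrightarrow> 0"
proof -
  have "\<exists>x. 0 < x \<and> x < inverse (real (Suc k)) \<and> \<not> P x" for k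
    using assms unfolding eventually_at_right_field by (meson of_nat_0_less_iff positive_imp_inverse_positive zero_less_Suc)
  then obtain x where x: "\<And>k. 0 < x k \<and> x k < inverse (real (Suc k)) \<and> \<not> P (x k)"
    by metis
  then have "\<forall>\<^sub>F k in sequentially. 0 \<le> x k" "\<forall>\<^sub>F k in sequentially. x k \<le> inverse (real (Suc k))"
    by (auto intro!: always_eventually less_imp_le)
  then have "x \<longlonglongrightarrow> 0"
    using LIMSEQ_inverse_real_of_nat by (rule tendsto_sandwich[OF _ _ tendsto_const])
  then show ?thesis using that x by blast
qed

lemma eventually_at_right_0_below_pi: "\<forall>\<^sub>F e in at_right 0. 0 < e \<and> e < pi"
  unfolding eventually_at_right_field using pi_gt_zero by blast

definition constant_on_fibres :: "('v \<Rightarrow> 'c) \<Rightarrow> 'v set \<Rightarrow> ('v \<Rightarrow> 'a) \<Rightarrow> bool" where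
  "constant_on_fibres c V u \<longleftrightarrow> (\<forall>v\<in>V. \<forall>w\<in>V. c v = c w \<longrightarrow> u v = u w)"

lemma normalized_motions_limit:
  fixes p :: "real \<Rightarrow> 'v \<Rightarrow> real^3"
  assumes V: "finite V" "v0 \<in> V" and E_V: "\<forall>a b. {a, b} \<in> E \<longrightarrow> a \<in> V \<and> b \<in> V"
    and cont: "\<And>v. v \<in> V \<Longrightarrow> isCont (\<lambda>e. p e v) 0" and x: "x \<longlonglongrightarrow> 0"
    and W: "\<And>k. cyl_coord_motion E (p (x k)) (W k)" "\<And>k. constant_on_fibres c V (W k)"
      "\<And>k. W k v0 = 0" "\<And>k. (\<Sum>v\<in>V. norm (W k v)) = 1"
  obtains l where "cyl_coord_motion E (p 0) l" "constant_on_fibres c V l"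
    "l v0 = 0" "(\<Sum>v\<in>V. norm (l v)) = 1"
proof -
  have "W k v \<in> cball 0 1" if "v \<in> V" for k v
    using member_le_sum[of v V "\<lambda>v. norm (W k v)"] W(4)[of k] V(1) that by auto
  then obtain r l where r: "strict_mono r" and l: "\<And>v. v \<in> V \<Longrightarrow> (\<lambda>k. W (r k) v) \<longlonglongrightarrow> l v"
    using finite_family_convergent_subseq[where f = W, OF V(1) compact_cball] by blast
  have "(\<lambda>k. x (r k)) \<longlonglongrightarrow> 0" using LIMSEQ_subseq_LIMSEQ[OF x r] by (simp add: comp_def)
  then have "cyl_coord_motion E (p 0) l"
    using W(1) l E_V isCont_tendsto_compose[OF cont]
    by (intro cyl_coord_motion_limit[where F = sequentially and p = "\<lambda>k. p (x (r k))"
          and u = "\<lambda>k. W (r k)"]) auto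
  moreover have "constant_on_fibres c V l"
    unfolding constant_on_fibres_def
  proof (intro ballI impI)
    fix v w assume vw: "v \<in> V" "w \<in> V" "c v = c w"
    then have "(\<lambda>k. W (r k) v) = (\<lambda>k. W (r k) w)"
      using W(2) unfolding constant_on_fibres_def by blast
    then have "(\<lambda>k. W (r k) w) \<longlonglongrightarrow> l v" using l[OF vw(1)] by simp
    then show "l v = l w" using l[OF vw(2)] by (rule LIMSEQ_unique)
  qed
  moreover have "l v0 = 0" using W(3) l[OF V(2)] by (simp add: LIMSEQ_const_iff)
  moreover have "(\<lambda>k. \<Sum>v\<in>V. norm (W (r k) v)) \<longlonglongrightarrow> (\<Sum>v\<in>V. norm (l v))"
    using l by (intro tendsto_sum tendsto_norm)
  then have "(\<Sum>v\<in>V. norm (l v)) = 1" using W(4) by (simp add: LIMSEQ_const_iff)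
  ultimately show ?thesis using that by blast
qed

text \<open>If the placements p e are not rigid for arbitrarily small e, normalised non-trivial motions
  accumulate at a non-trivial motion of p 0 which is still constant on the fibres of c.\<close>
lemma eventually_cyl_coord_rigid:
  fixes p :: "real \<Rightarrow> 'v \<Rightarrow> real^3" and c :: "'v \<Rightarrow> 'c"
  assumes V: "finite V" "V \<noteq> {}" and E_V: "\<forall>a b. {a, b} \<in> E \<longrightarrow> a \<in> V \<and> b \<in> V"
    and cont: "\<And>v. v \<in> V \<Longrightarrow> isCont (\<lambda>e. p e v) 0"
    and fibres: "\<forall>\<^sub>F e in at_right 0. \<forall>u. cyl_coord_motion E (p e) u \<longrightarrow> constant_on_fibres c V u"
    and limit: "\<And>u. cyl_coord_motion E (p 0) u \<Longrightarrow> constant_on_fibres c V u \<Longrightarrow> u constant_on V"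
  shows "\<forall>\<^sub>F e in at_right 0. \<forall>u. cyl_coord_motion E (p e) u \<longrightarrow> u constant_on V"
proof (rule ccontr)
  assume not_rigid: "\<not> ?thesis"
  have "\<not> (\<forall>\<^sub>F e in at_right 0. (\<forall>u. cyl_coord_motion E (p e) u \<longrightarrow> constant_on_fibres c V u)
      \<longrightarrow> (\<forall>u. cyl_coord_motion E (p e) u \<longrightarrow> u constant_on V))"
  proof
    assume "\<forall>\<^sub>F e in at_right 0. (\<forall>u. cyl_coord_motion E (p e) u \<longrightarrow> constant_on_fibres c V u)
      \<longrightarrow> (\<forall>u. cyl_coord_motion E (p e) u \<longrightarrow> u constant_on V)"
    from eventually_mp[OF this fibres] show False using not_rigid by blast
  qed
  then obtain x where x: "\<And>k. 0 < x k" "x \<longlonglongrightarrow> 0"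
    and nonrigid: "\<And>k. (\<forall>u. cyl_coord_motion E (p (x k)) u \<longrightarrow> constant_on_fibres c V u)
      \<and> \<not> (\<forall>u. cyl_coord_motion E (p (x k)) u \<longrightarrow> u constant_on V)"
    by (rule not_eventually_at_right_zero_seq) blast
  obtain v0 where v0: "v0 \<in> V" using V(2) by blast
  have "\<exists>w. cyl_coord_motion E (p (x k)) w \<and> constant_on_fibres c V w \<and> w v0 = 0
      \<and> (\<Sum>v\<in>V. norm (w v)) = 1" for k
  proof -
    obtain u where u: "cyl_coord_motion E (p (x k)) u" "\<not> u constant_on V"
      using nonrigid[of k] by blast
    obtain w where "cyl_coord_motion E (p (x k)) w" "w v0 = 0" "(\<Sum>v\<in>V. norm (w v)) = 1"
      "\<And>v v'. u v = u v' \<Longrightarrow> w v = w v'"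
      using cyl_coord_motion_normalize[OF u(1) V(1) v0 u(2)] by blast
    then show ?thesis using nonrigid[of k] u(1) unfolding constant_on_fibres_def by blast
  qed
  then obtain W where W: "\<And>k. cyl_coord_motion E (p (x k)) (W k)" "\<And>k. constant_on_fibres c V (W k)"
    "\<And>k. W k v0 = 0" "\<And>k. (\<Sum>v\<in>V. norm (W k v)) = 1"
    by metis
  obtain l where "cyl_coord_motion E (p 0) l" "constant_on_fibres c V l"
    and l: "l v0 = 0" "(\<Sum>v\<in>V. norm (l v)) = 1"
    by (rule normalized_motions_limit[OF V(1) v0 E_V cont x(2) W])
  then have "l constant_on V" using limit by blast
  then have "\<forall>v\<in>V. l v = 0" using v0 l(1) unfolding constant_on_def by metis
  then show False using l(2) by simp
qed

section \<open>Symmetric graphs\<close>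

lemma simple_graph_edge: "simple_graph V E \<Longrightarrow> {a, b} \<in> E \<Longrightarrow> a \<in> V \<and> b \<in> V \<and> a \<noteq> b"
  unfolding simple_graph_def by (metis doubleton_eq_iff)

lemma simple_graph_finite_edges: "simple_graph V E \<Longrightarrow> finite {(a, b). {a, b} \<in> E}"
proof -
  assume G: "simple_graph V E"
  then have "{(a, b). {a, b} \<in> E} \<subseteq> V \<times> V" by (auto dest: simple_graph_edge[OF G])
  then show ?thesis using G finite_subset unfolding simple_graph_def by blast
qed

lemma sym_graph_closed: "sym_graph Gam V E \<phi> \<Longrightarrow> g \<in> carrier Gam \<Longrightarrow> v \<in> V \<Longrightarrow> \<phi> g v \<in> V"
  unfolding sym_graph_def graph_aut_def bij_betw_def by blast

lemma sym_graph_inj_on: "sym_graph Gam V E \<phi> \<Longrightarrow> g \<in> carrier Gam \<Longrightarrow> inj_on (\<phi> g) V"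
  unfolding sym_graph_def graph_aut_def bij_betw_def by blast

lemma sym_graph_edge:
  "sym_graph Gam V E \<phi> \<Longrightarrow> g \<in> carrier Gam \<Longrightarrow> a \<in> V \<Longrightarrow> b \<in> V \<Longrightarrow> {a, b} \<in> E
    \<Longrightarrow> {\<phi> g a, \<phi> g b} \<in> E"
  unfolding sym_graph_def graph_aut_def by blast

lemma sym_graph_mult:
  "sym_graph Gam V E \<phi> \<Longrightarrow> g \<in> carrier Gam \<Longrightarrow> h \<in> carrier Gam \<Longrightarrow> v \<in> V
    \<Longrightarrow> \<phi> (g \<otimes>\<^bsub>Gam\<^esub> h) v = \<phi> g (\<phi> h v)"
  unfolding sym_graph_def by blast

lemma (in group) sym_graph_one:
  assumes "sym_graph G V E \<phi>" and "v \<in> V"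
  shows "\<phi> \<one> v = v"
proof -
  have "\<phi> \<one> (\<phi> \<one> v) = \<phi> \<one> v"
    using sym_graph_mult[OF assms(1), of \<one> \<one> v] assms(2) by simp
  then show ?thesis
    using inj_onD[OF sym_graph_inj_on[OF assms(1) one_closed]] sym_graph_closed[OF assms(1) one_closed]
      assms(2) by blast
qed

lemma (in group) sym_graph_inv:
  assumes "sym_graph G V E \<phi>" and g: "g \<in> carrier G" and v: "v \<in> V"
  shows "\<phi> (inv g) (\<phi> g v) = v"
proof -
  have "\<phi> (inv g) (\<phi> g v) = \<phi> (inv g \<otimes> g) v"
    using sym_graph_mult[OF assms(1) inv_closed[OF g] g v] by simp
  also have "\<dots> = v" using g sym_graph_one[OF assms(1) v] by simp
  finally show ?thesis .
qed

section \<open>Splitting the contracted vertices into copies of K4\<close>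

locale K4_contraction = group Gam
  for Gam :: "('g, 'm) monoid_scheme" +
  fixes V :: "'v set" and E :: "'v set set" and \<phi> :: "'g \<Rightarrow> 'v \<Rightarrow> 'v"
    and \<tau> :: "'g \<Rightarrow> real^3 \<Rightarrow> real^3" and S :: "'v set" and s :: "nat \<Rightarrow> 'v"
    and p' :: "'v set \<Rightarrow> real^3"
  assumes graph: "simple_graph V E" and sym: "sym_graph Gam V E \<phi>" and rep: "cyl_sym_rep Gam \<tau>"
    and S_V: "S \<subseteq> V" and S_enum: "bij_betw s {..<4} S"
    and S_complete: "\<forall>a\<in>S. \<forall>b\<in>S. a \<noteq> b \<longrightarrow> {a, b} \<in> E"
    and S_free: "\<forall>g\<in>carrier Gam. g \<noteq> \<one>\<^bsub>Gam\<^esub> \<longrightarrow> \<phi> g ` S \<inter> S = {}"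
    and contracted_framework: "cyl_framework (contr_V Gam V \<phi> S) (contr_E Gam E \<phi> S) p'"
    and contracted_sym: "sym_framework Gam (contr_V Gam V \<phi> S) (contr_action \<phi>) \<tau> p'"
    and contracted_rigid: "cyl_inf_rigid (contr_V Gam V \<phi> S) (contr_E Gam E \<phi> S) p'"
begin

abbreviation "cls \<equiv> contr_class Gam \<phi> S"

lemma s_in_V: "i < 4 \<Longrightarrow> s i \<in> V"
  using S_enum S_V unfolding bij_betw_def by auto

lemma edge_in_V: "\<forall>a b. {a, b} \<in> E \<longrightarrow> a \<in> V \<and> b \<in> V"
  using simple_graph_edge[OF graph] by blast

lemma S_image: "S = s ` {..<4}"
  using S_enum unfolding bij_betw_def by blast

lemma copy_eq:
  assumes g: "g \<in> carrier Gam" and h: "h \<in> carrier Gam" and ij: "i < 4" "j < 4"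
    and eq: "\<phi> g (s i) = \<phi> h (s j)"
  shows "g = h \<and> i = j"
proof -
  have "\<phi> (inv\<^bsub>Gam\<^esub> h \<otimes>\<^bsub>Gam\<^esub> g) (s i) = s j"
    using sym_graph_mult[OF sym] sym_graph_inv[OF sym] eq g h ij s_in_V by simp
  then have "\<phi> (inv\<^bsub>Gam\<^esub> h \<otimes>\<^bsub>Gam\<^esub> g) ` S \<inter> S \<noteq> {}"
    using S_enum ij unfolding bij_betw_def by blast
  then have "inv\<^bsub>Gam\<^esub> h \<otimes>\<^bsub>Gam\<^esub> g = \<one>\<^bsub>Gam\<^esub>" using S_free g h by blast
  then have "g = h" using g h by (metis inv_closed inv_equality inv_inv)
  moreover have "s i = s j"
    using inj_onD[OF sym_graph_inj_on[OF sym g]] eq ij s_in_V \<open>g = h\<close> by blast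
  ultimately show ?thesis using S_enum ij unfolding bij_betw_def inj_on_def by blast
qed

definition copies :: "'v set" where
  "copies = (\<Union>g\<in>carrier Gam. \<phi> g ` S)"

lemma copiesE:
  assumes "v \<in> copies"
  obtains g i where "g \<in> carrier Gam" "i < 4" "v = \<phi> g (s i)"
  using assms that unfolding copies_def by (auto simp: S_image)

lemma in_copies: "g \<in> carrier Gam \<Longrightarrow> i < 4 \<Longrightarrow> \<phi> g (s i) \<in> copies"
  unfolding copies_def using S_image by blast

lemma copies_phiD:
  assumes g: "g \<in> carrier Gam" and v: "v \<in> V" and "\<phi> g v \<in> copies"
  shows "v \<in> copies"
proof -
  obtain h i where h: "h \<in> carrier Gam" "i < 4" "\<phi> g v = \<phi> h (s i)"
    using copiesE[OF \<open>\<phi> g v \<in> copies\<close>] by blast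
  have "v = \<phi> (inv\<^bsub>Gam\<^esub> g) (\<phi> g v)" using sym_graph_inv[OF sym g v] by simp
  also have "\<dots> = \<phi> (inv\<^bsub>Gam\<^esub> g \<otimes>\<^bsub>Gam\<^esub> h) (s i)"
    using h g sym_graph_mult[OF sym] s_in_V by simp
  finally show ?thesis using h g by (simp add: in_copies)
qed

definition copy_index :: "'v \<Rightarrow> 'g \<times> nat" where
  "copy_index v = (SOME (g, i). g \<in> carrier Gam \<and> i < 4 \<and> v = \<phi> g (s i))"

lemma copy_index_phi: "g \<in> carrier Gam \<Longrightarrow> i < 4 \<Longrightarrow> copy_index (\<phi> g (s i)) = (g, i)"
  unfolding copy_index_def by (rule some_equality) (auto dest: copy_eq)

lemma in_contr_class: "v \<in> cls v"
  unfolding contr_class_def by blast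

lemma contr_class_copy:
  assumes g: "g \<in> carrier Gam" and i: "i < 4"
  shows "cls (\<phi> g (s i)) = \<phi> g ` S"
proof -
  have "{\<phi> h ` S | h. h \<in> carrier Gam \<and> \<phi> g (s i) \<in> \<phi> h ` S} = {\<phi> g ` S}"
    using g i copy_eq unfolding S_image by blast
  then show ?thesis unfolding contr_class_def using i S_image by auto
qed

lemma contr_class_other: "v \<notin> copies \<Longrightarrow> cls v = {v}"
  unfolding contr_class_def copies_def by auto

lemma contr_class_S: "cls (s 0) = S"
proof -
  have "\<phi> \<one>\<^bsub>Gam\<^esub> ` S = id ` S" using sym_graph_one[OF sym] S_V by (intro image_cong) auto
  moreover have "\<phi> \<one>\<^bsub>Gam\<^esub> (s 0) = s 0" using sym_graph_one[OF sym] s_in_V by simp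
  ultimately show ?thesis using contr_class_copy[of "\<one>\<^bsub>Gam\<^esub>" 0] by simp
qed

lemma contr_class_in_contr_V: "v \<in> V \<Longrightarrow> cls v \<in> contr_V Gam V \<phi> S"
  unfolding contr_V_def by blast

lemma contracted_placement_sym:
  "g \<in> carrier Gam \<Longrightarrow> X \<in> contr_V Gam V \<phi> S \<Longrightarrow> \<tau> g (p' X) = p' (\<phi> g ` X)"
  using contracted_sym unfolding sym_framework_def contr_action_def by simp

lemma contracted_placement_cylinder: "X \<in> contr_V Gam V \<phi> S \<Longrightarrow> p' X \<in> cylinder"
  using contracted_framework unfolding cyl_framework_def by simp

lemma tau_mult: "g \<in> carrier Gam \<Longrightarrow> h \<in> carrier Gam \<Longrightarrow> \<tau> (g \<otimes>\<^bsub>Gam\<^esub> h) x = \<tau> g (\<tau> h x)"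
  using rep unfolding cyl_sym_rep_def by simp

lemma tau_orthogonal: "g \<in> carrier Gam \<Longrightarrow> orthogonal_transformation (\<tau> g)"
  using rep unfolding cyl_sym_rep_def by simp

lemma tau_cylinder: "g \<in> carrier Gam \<Longrightarrow> \<tau> g ` cylinder = cylinder"
  using rep unfolding cyl_sym_rep_def by simp

lemma contracted_S_cylinder: "p' S \<in> cylinder"
  using contracted_placement_cylinder contr_class_in_contr_V[OF s_in_V[of 0]] contr_class_S by simp

definition split_placement :: "real \<Rightarrow> 'v \<Rightarrow> real^3" where
  "split_placement e v =
     (if v \<in> copies then (case copy_index v of (g, i) \<Rightarrow> \<tau> g (K4_placement e (p' S) i)) else p' {v})"

lemma split_placement_copy:
  "g \<in> carrier Gam \<Longrightarrow> i < 4 \<Longrightarrow> split_placement e (\<phi> g (s i)) = \<tau> g (K4_placement e (p' S) i)"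
  by (simp add: split_placement_def in_copies copy_index_phi)

lemma split_placement_other: "v \<notin> copies \<Longrightarrow> split_placement e v = p' {v}"
  by (simp add: split_placement_def)

lemma sym_framework_split_placement: "sym_framework Gam V \<phi> \<tau> (split_placement e)"
  unfolding sym_framework_def
proof (intro ballI)
  fix g v assume g: "g \<in> carrier Gam" and v: "v \<in> V"
  show "\<tau> g (split_placement e v) = split_placement e (\<phi> g v)"
  proof (cases "v \<in> copies")
    case True
    then obtain h i where h: "h \<in> carrier Gam" "i < 4" "v = \<phi> h (s i)" by (rule copiesE)
    then have "\<phi> g v = \<phi> (g \<otimes>\<^bsub>Gam\<^esub> h) (s i)" using g sym_graph_mult[OF sym] s_in_V by simp
    then show ?thesis using g h by (simp add: split_placement_copy tau_mult)
  next
    case False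
    then have "\<phi> g v \<notin> copies" using copies_phiD g v by blast
    then show ?thesis
      using False contracted_placement_sym[OF g] contr_class_in_contr_V[OF v] contr_class_other
      by (simp add: split_placement_other)
  qed
qed

lemma split_placement_cylinder:
  assumes v: "v \<in> V" shows "split_placement e v \<in> cylinder"
proof (cases "v \<in> copies")
  case True
  then obtain g i where g: "g \<in> carrier Gam" "i < 4" "v = \<phi> g (s i)" by (rule copiesE)
  have "\<tau> g (K4_placement e (p' S) i) \<in> \<tau> g ` cylinder"
    using K4_placement_cylinder[OF contracted_S_cylinder] by blast
  then show ?thesis using g tau_cylinder[OF g(1)] by (simp add: split_placement_copy)
next
  case False
  then show ?thesis
    using contracted_placement_cylinder contr_class_in_contr_V[OF v] contr_class_other[OF False]
    by (simp add: split_placement_other)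
qed

lemma split_placement_zero: "v \<in> V \<Longrightarrow> split_placement 0 v = p' (cls v)"
proof (cases "v \<in> copies")
  case True
  then obtain g i where "g \<in> carrier Gam" "i < 4" "v = \<phi> g (s i)" by (rule copiesE)
  then show ?thesis
    using contracted_placement_sym contr_class_in_contr_V[OF s_in_V[of 0]]
    by (simp add: split_placement_copy K4_placement_zero contr_class_copy contr_class_S)
qed (simp add: split_placement_other contr_class_other)

lemma isCont_split_placement: "isCont (\<lambda>e. split_placement e v) e"
proof (cases "v \<in> copies")
  case True
  then obtain g i where g: "g \<in> carrier Gam" "i < 4" "v = \<phi> g (s i)" by (rule copiesE)
  have "isCont (\<tau> g) (K4_placement e (p' S) i)"
    using tau_orthogonal[OF g(1)] orthogonal_transformation_linear linear_continuous_at
      linear_conv_bounded_linear by blast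
  then show ?thesis using g
    by (simp add: split_placement_copy isCont_o2[OF isCont_K4_placement])
qed (simp add: split_placement_other)

lemma same_contr_class_cases:
  assumes "cls a = cls b"
  obtains "b = a"
    | g i j where "g \<in> carrier Gam" "i < 4" "j < 4" "a = \<phi> g (s i)" "b = \<phi> g (s j)"
proof (cases "a \<in> copies")
  case True
  then obtain g i where g: "g \<in> carrier Gam" "i < 4" "a = \<phi> g (s i)" by (rule copiesE)
  then have "b \<in> \<phi> g ` S" using contr_class_copy in_contr_class[of b] assms by simp
  then obtain j where "j < 4" "b = \<phi> g (s j)" using S_image by auto
  then show ?thesis using that(2) g by blast
next
  case False
  then show ?thesis using that(1) assms contr_class_other in_contr_class[of b] by (metis singletonD)
qed

lemma split_motion_constant_on_copy:
  assumes e: "0 < e" "e < pi" and u: "cyl_coord_motion E (split_placement e) u"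
    and g: "g \<in> carrier Gam" and k: "k < 4"
  shows "u (\<phi> g (s k)) = u (\<phi> g (s 0))"
proof -
  obtain d c where dc: "d \<noteq> 0" "c \<noteq> 0" "\<forall>x y. cross_z (\<tau> g x) (\<tau> g y) = d * cross_z x y"
    "\<forall>x. \<tau> g x $ 3 = c * x $ 3"
    by (rule cylinder_isometry_coords[OF tau_orthogonal[OF g] tau_cylinder[OF g]])
  define u' where "u' i = u (\<phi> g (s i))" for i
  have "cyl_coord_motion {{i, j} | i j. i < 4 \<and> j < (4::nat) \<and> i \<noteq> j}
      (\<tau> g \<circ> K4_placement e (p' S)) u'"
    unfolding cyl_coord_motion_def
  proof (intro allI impI)
    fix i j assume "{i, j} \<in> {{i, j} | i j. i < 4 \<and> j < (4::nat) \<and> i \<noteq> j}"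
    then have ij: "i < 4" "j < 4" "i \<noteq> j" by (auto simp: doubleton_eq_iff)
    then have "s i \<noteq> s j" using S_enum unfolding bij_betw_def inj_on_def by blast
    then have "{\<phi> g (s i), \<phi> g (s j)} \<in> E"
      using S_complete S_image ij s_in_V by (intro sym_graph_edge[OF sym g]) auto
    then have "cyl_edge_row (split_placement e (\<phi> g (s i))) (split_placement e (\<phi> g (s j)))
        (u (\<phi> g (s i))) (u (\<phi> g (s j))) = 0"
      using u unfolding cyl_coord_motion_def by blast
    then show "cyl_edge_row ((\<tau> g \<circ> K4_placement e (p' S)) i) ((\<tau> g \<circ> K4_placement e (p' S)) j)
        (u' i) (u' j) = 0"
      using ij g by (simp add: split_placement_copy u'_def)
  qed
  from K4_placement_coord_rigid[OF contracted_S_cylinder e cyl_coord_motion_map[OF dc(3,4) this] k]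
  show ?thesis using dc(1,2) by (simp add: prod_eq_iff u'_def)
qed

lemma split_motion_constant_on_fibres:
  assumes e: "0 < e" "e < pi" and u: "cyl_coord_motion E (split_placement e) u"
  shows "constant_on_fibres cls V u"
  unfolding constant_on_fibres_def
proof (intro ballI impI)
  fix v w assume "cls v = cls w"
  then show "u v = u w"
  proof (cases rule: same_contr_class_cases)
    case (2 g i j)
    then show ?thesis
      using split_motion_constant_on_copy[OF e u 2(1)] \<open>i < 4\<close> \<open>j < 4\<close> by metis
  qed simp
qed

lemma split_placement_distinct_in_class:
  assumes e: "0 < e" "e < pi" and ab: "cls a = cls b" "a \<noteq> b"
  shows "split_placement e a \<noteq> split_placement e b"
  using ab(1)
proof (cases rule: same_contr_class_cases)
  case (2 g i j)
  then have "K4_placement e (p' S) i \<noteq> K4_placement e (p' S) j"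
    using K4_placement_inj[OF contracted_S_cylinder e] ab(2) by blast
  then show ?thesis
    using orthogonal_transformation_inj[OF tau_orthogonal[OF \<open>g \<in> carrier Gam\<close>]] 2
    by (simp add: split_placement_copy inj_eq)
qed (use ab(2) in simp)

lemma contr_edgeE:
  assumes "{X, Y} \<in> contr_E Gam E \<phi> S"
  obtains a b where "{a, b} \<in> E" "X = cls a" "Y = cls b"
proof -
  obtain a b where "{a, b} \<in> E" "{X, Y} = {cls a, cls b}"
    using assms unfolding contr_E_def by blast
  then show ?thesis using that by (metis doubleton_eq_iff insert_commute)
qed

lemma contr_edge_in_contr_V:
  "\<forall>X Y. {X, Y} \<in> contr_E Gam E \<phi> S \<longrightarrow> X \<in> contr_V Gam V \<phi> S \<and> Y \<in> contr_V Gam V \<phi> S"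
  using edge_in_V contr_class_in_contr_V by (blast elim: contr_edgeE)

lemma split_placement_zero_rigid:
  assumes u: "cyl_coord_motion E (split_placement 0) u"
    and fibres: "constant_on_fibres cls V u"
  shows "u constant_on V"
proof -
  define u' where "u' X = u (SOME v. v \<in> V \<and> cls v = X)" for X
  have u': "u' (cls v) = u v" if "v \<in> V" for v
  proof -
    have "\<exists>w. w \<in> V \<and> cls w = cls v" using that by blast
    then have "(SOME w. w \<in> V \<and> cls w = cls v) \<in> V \<and> cls (SOME w. w \<in> V \<and> cls w = cls v) = cls v"
      by (rule someI_ex)
    then show ?thesis unfolding u'_def using fibres that unfolding constant_on_fibres_def by metis
  qed
  have motion: "cyl_coord_motion (contr_E Gam E \<phi> S) p' u'"
    unfolding cyl_coord_motion_def
  proof (intro allI impI)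
    fix X Y assume "{X, Y} \<in> contr_E Gam E \<phi> S"
    then obtain a b where ab: "{a, b} \<in> E" "X = cls a" "Y = cls b" by (rule contr_edgeE)
    then have "a \<in> V" "b \<in> V" using edge_in_V by blast+
    moreover have "cyl_edge_row (split_placement 0 a) (split_placement 0 b) (u a) (u b) = 0"
      using u ab(1) unfolding cyl_coord_motion_def by blast
    ultimately show "cyl_edge_row (p' X) (p' Y) (u' X) (u' Y) = 0"
      using ab by (simp add: u' split_placement_zero)
  qed
  have cyl: "\<forall>X\<in>contr_V Gam V \<phi> S. p' X \<in> cylinder" using contracted_placement_cylinder by blast
  have "u' constant_on contr_V Gam V \<phi> S"
    using contracted_rigid motion
    unfolding cyl_inf_rigid_iff_coord[OF cyl contr_edge_in_contr_V] by blast
  then show ?thesis using u' contr_class_in_contr_V unfolding constant_on_def by metis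
qed

lemma eventually_split_placement_distinct:
  assumes ab: "{a, b} \<in> E" "cls a \<noteq> cls b"
  shows "\<forall>\<^sub>F e in at_right 0. split_placement e a \<noteq> split_placement e b"
proof -
  have "{cls a, cls b} \<in> contr_E Gam E \<phi> S" using ab unfolding contr_E_def by blast
  then have "split_placement 0 a - split_placement 0 b \<noteq> 0"
    using contracted_framework edge_in_V ab(1) unfolding cyl_framework_def
    by (simp add: split_placement_zero)
  moreover have "((\<lambda>e. split_placement e a - split_placement e b)
      \<longlongrightarrow> split_placement 0 a - split_placement 0 b) (at_right 0)"
    using isCont_split_placement unfolding isCont_def
    by (intro tendsto_diff) (auto intro: tendsto_mono[OF at_le, rotated])
  ultimately show ?thesis
    by (auto elim: eventually_mono dest: tendsto_imp_eventually_ne[where c' = 0])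
qed

lemma eventually_cyl_framework_split_placement:
  "\<forall>\<^sub>F e in at_right 0. cyl_framework V E (split_placement e)"
proof -
  let ?P = "{(a, b). {a, b} \<in> E \<and> cls a \<noteq> cls b}"
  have "finite ?P"
    using simple_graph_finite_edges[OF graph] by (rule rev_finite_subset) auto
  then have "\<forall>\<^sub>F e in at_right 0. \<forall>(a, b)\<in>?P. split_placement e a \<noteq> split_placement e b"
    by (intro eventually_ball_finite) (auto intro: eventually_split_placement_distinct)
  then show ?thesis
    using eventually_at_right_0_below_pi
  proof eventually_elim
    case (elim e)
    show ?case
      unfolding cyl_framework_def
    proof (intro conjI ballI allI impI)
      fix v assume "v \<in> V" then show "split_placement e v \<in> cylinder" by (rule split_placement_cylinder)
    next
      fix a b assume ab: "{a, b} \<in> E"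
      show "split_placement e a \<noteq> split_placement e b"
      proof (cases "cls a = cls b")
        case True
        moreover have "a \<noteq> b" using simple_graph_edge[OF graph ab] by blast
        ultimately show ?thesis using elim by (intro split_placement_distinct_in_class) auto
      qed (use ab elim in auto)
    qed
  qed
qed

theorem graph_tau_rigid: "tau_rigid Gam V E \<phi> \<tau>"
proof -
  have V: "finite V" "V \<noteq> {}" using graph s_in_V[of 0] unfolding simple_graph_def by auto
  have "\<forall>\<^sub>F e in at_right 0. \<forall>u. cyl_coord_motion E (split_placement e) u \<longrightarrow> u constant_on V"
  proof (rule eventually_cyl_coord_rigid[where c = cls, OF V edge_in_V isCont_split_placement])
    show "\<forall>\<^sub>F e in at_right 0. \<forall>u. cyl_coord_motion E (split_placement e) u
        \<longrightarrow> constant_on_fibres cls V u"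
      using eventually_at_right_0_below_pi by eventually_elim (blast intro: split_motion_constant_on_fibres)
  qed (rule split_placement_zero_rigid)
  then have "\<forall>\<^sub>F e in at_right 0. cyl_framework V E (split_placement e)
      \<and> (\<forall>u. cyl_coord_motion E (split_placement e) u \<longrightarrow> u constant_on V)"
    using eventually_cyl_framework_split_placement by (simp add: eventually_conj_iff)
  then obtain e where "cyl_framework V E (split_placement e)"
      "\<forall>u. cyl_coord_motion E (split_placement e) u \<longrightarrow> u constant_on V"
    using eventually_happens'[OF trivial_limit_at_right_real] by blast
  then show ?thesis
    unfolding tau_rigid_def
    using sym_framework_split_placement cyl_inf_rigid_iff_coord[OF _ edge_in_V] split_placement_cylinder
    by blast
qed

end

theorem lemma4p4:
  fixes Gam :: "('g, 'm) monoid_scheme"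
    and V :: "'v set" and E :: "'v set set"
    and \<phi> :: "'g \<Rightarrow> 'v \<Rightarrow> 'v" and \<tau> :: "'g \<Rightarrow> real^3 \<Rightarrow> real^3"
    and S :: "'v set"
  assumes "group Gam" and "finite (carrier Gam)"
    and "simple_graph V E"
    and "sym_graph Gam V E \<phi>"
    and "cyl_sym_rep Gam \<tau>"
    and "S \<subseteq> V" and "card S = 4"
    and "\<forall>a\<in>S. \<forall>b\<in>S. a \<noteq> b \<longrightarrow> {a, b} \<in> E"
    and "\<forall>g\<in>carrier Gam. g \<noteq> \<one>\<^bsub>Gam\<^esub> \<longrightarrow> \<phi> g ` S \<inter> S = {}"
    and "contr_simple Gam E \<phi> S"
    and "tau_rigid Gam (contr_V Gam V \<phi> S) (contr_E Gam E \<phi> S) (contr_action \<phi>) \<tau>"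
  shows "tau_rigid Gam V E \<phi> \<tau>"
proof -
  have "finite S" using assms(7) card.infinite by fastforce
  then obtain s where "bij_betw s {0..<card S} S" using ex_bij_betw_nat_finite by blast
  then have s: "bij_betw s {..<4} S" using assms(7) by (simp add: atLeast0LessThan)
  obtain p' where p': "cyl_framework (contr_V Gam V \<phi> S) (contr_E Gam E \<phi> S) p'"
    "sym_framework Gam (contr_V Gam V \<phi> S) (contr_action \<phi>) \<tau> p'"
    "cyl_inf_rigid (contr_V Gam V \<phi> S) (contr_E Gam E \<phi> S) p'"
    using assms(11) unfolding tau_rigid_def by blast
  interpret K4_contraction Gam V E \<phi> \<tau> S s p'
    by (intro K4_contraction.intro K4_contraction_axioms.intro assms(1,3-6,8,9) s p')
  show ?thesis by (rule graph_tau_rigid)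
qed

end
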